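(* Let $p$ be a lattice norm on $\mathbb{R}^2$ with $p((1,0))=p((0,1))=1$, and let $\Phi$ be an Orlicz function which does not satisfy the suitable $\Delta_2$-condition (relative to $(\Omega,\Sigma,\mu)$). Then for every $\varepsilon>0$ there exists a linear operator $P_\varepsilon:\ell^\infty\to L^\Phi(\mu)$ which is nonnegative (i.e. $P_\varepsilon z\ge0$ a.e. whenever $z\ge0$ coordinatewise) and satisfies $$\|z\|_\infty\le\|P_\varepsilon z\|_{\Phi,p}\le(1+\varepsilon)\|z\|_\infty\qquad\text{for all }z\in\ell^\infty.$$
   Context: $(\Omega,\Sigma,\mu)$ is a $\sigma$-finite complete measure space; all atoms are assumed to have measure $1$ and the set of atoms is either finite or countably infinite (identified with $\mathbb{N}$). Write $\Omega_a$ for the union of atoms and $\Omega_{na}=\Omega\setminus\Omega_a$. $L^0$ is the space of (classes of a.e. equal) real measurable functions. An Orlicz function is a function $\Phi:\mathbb{R}\to[0,\infty)$ which is convex, even, vanishes at $0$ and is not identically zero. $I_\Phi(x)=\int_\Omega\Phi(x(t))\,d\mu\in[0,+\infty]$; $L^\Phi(\mu)=\{x\in L^0: I_\Phi(\lambda x)<\infty\text{ for some }\lambda>0\}$. A lattice norm on $\mathbb{R}^2$ is a norm $p$ with $p((u,v))\le p((u',v'))$ whenever $|u|\le|u'|,|v|\le|v'|$; $\|x\|_{\Phi,p}=\inf_{k>0}\frac1k p((1,I_\Phi(kx)))$ with the convention $p((1,+\infty))=+\infty$. $\Phi\in\Delta_2(\mathbb{R}_+)$ means there is $K>0$ with $\Phi(2u)\le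 K\Phi(u)$ for all $u\ge0$; $\Phi\in\Delta_2(\infty)$ means there are $u_0,K>0$ with $\Phi(2u)\le K\Phi(u)$ for all $u\ge u_0$; $\Phi\in\Delta_2(0)$ means there are $u_0,K>0$ with $\Phi(2u)\le K\Phi(u)$ for all $u\in[0,u_0]$. The suitable $\Delta_2$-condition is: $\Delta_2(\mathbb{R}_+)$ if $\mu$ is non-atomic and $\mu(\Omega)=\infty$; $\Delta_2(\infty)$ if $\mu$ is non-atomic and finite; $\Delta_2(0)$ if $\Omega=\mathbb{N}$ with counting measure; if $\mu(\Omega_{na})>0$ and there are finitely many atoms, the condition suitable for the non-atomic part $\Omega_{na}$; if $\mu(\Omega_{na})>0$ and the atoms form a copy of $\mathbb{N}$, the conjunction of the condition suitable for $\Omega_{na}$ and $\Delta_2(0)$. *)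

theory Defs
  imports "HOL-Analysis.Analysis"
begin

definition orlicz_function :: "(real \<Rightarrow> real) \<Rightarrow> bool" where
  "orlicz_function \<Phi> \<longleftrightarrow> convex_on UNIV \<Phi> \<and> (\<forall>u. \<Phi> (- u) = \<Phi> u) \<and> \<Phi> 0 = 0
     \<and> (\<forall>u. 0 \<le> \<Phi> u) \<and> (\<exists>u. \<Phi> u \<noteq> 0)"

definition lattice_norm :: "(real \<times> real \<Rightarrow> real) \<Rightarrow> bool" where
  "lattice_norm p \<longleftrightarrow>
     (\<forall>x. p x = 0 \<longleftrightarrow> x = 0) \<and>
     (\<forall>c x. p (c *\<^sub>R x) = \<bar>c\<bar> * p x) \<and>
     (\<forall>x y. p (x + y) \<le> p x + p y) \<and>
     (\<forall>u v u' v'. \<bar>u\<bar> \<le> \<bar>u'\<bar> \<and> \<bar>v\<bar> \<le> \<bar>v'\<bar> \<longrightarrow> p (u, v) \<le> p (u', v'))"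

definition I_Phi :: "'a measure \<Rightarrow> (real \<Rightarrow> real) \<Rightarrow> ('a \<Rightarrow> real) \<Rightarrow> ennreal" where
  "I_Phi M \<Phi> x = (\<integral>\<^sup>+ t. ennreal (\<Phi> (x t)) \<partial>M)"

definition orlicz_space :: "'a measure \<Rightarrow> (real \<Rightarrow> real) \<Rightarrow> ('a \<Rightarrow> real) set" where
  "orlicz_space M \<Phi> = {x \<in> borel_measurable M. \<exists>c>0. I_Phi M \<Phi> (\<lambda>t. c * x t) < \<infinity>}"

text \<open>\<open>\<parallel>x\<parallel>_{\<Phi>,p} = inf_{k>0} (1/k) p(1, I_\<Phi>(kx))\<close>, with \<open>p(1,\<infinity>) = \<infinity>\<close>:
  values of k with infinite modular contribute \<infinity> and hence can be dropped from the infimum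
  (for x in the Orlicz space the remaining set is nonempty).\<close>
definition orlicz_norm :: "'a measure \<Rightarrow> (real \<Rightarrow> real) \<Rightarrow> (real \<times> real \<Rightarrow> real) \<Rightarrow> ('a \<Rightarrow> real) \<Rightarrow> real" where
  "orlicz_norm M \<Phi> p x =
     Inf {(1 / k) * p (1, enn2real (I_Phi M \<Phi> (\<lambda>t. k * x t))) | k. k > 0 \<and> I_Phi M \<Phi> (\<lambda>t. k * x t) < \<infinity>}"

definition delta2_Rplus :: "(real \<Rightarrow> real) \<Rightarrow> bool" where
  "delta2_Rplus \<Phi> \<longleftrightarrow> (\<exists>K>0. \<forall>u\<ge>0. \<Phi> (2 * u) \<le> K * \<Phi> u)"

definition delta2_infty :: "(real \<Rightarrow> real) \<Rightarrow> bool" where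
  "delta2_infty \<Phi> \<longleftrightarrow> (\<exists>u0>0. \<exists>K>0. \<forall>u\<ge>u0. \<Phi> (2 * u) \<le> K * \<Phi> u)"

definition delta2_zero :: "(real \<Rightarrow> real) \<Rightarrow> bool" where
  "delta2_zero \<Phi> \<longleftrightarrow> (\<exists>u0>0. \<exists>K>0. \<forall>u. 0 \<le> u \<and> u \<le> u0 \<longrightarrow> \<Phi> (2 * u) \<le> K * \<Phi> u)"

definition measure_atom :: "'a measure \<Rightarrow> 'a set \<Rightarrow> bool" where
  "measure_atom M B \<longleftrightarrow> B \<in> sets M \<and> 0 < emeasure M B \<and>
     (\<forall>C\<in>sets M. C \<subseteq> B \<longrightarrow> emeasure M C = 0 \<or> emeasure M (B - C) = 0)"

definition atomic_structure :: "'a measure \<Rightarrow> nat set \<Rightarrow> (nat \<Rightarrow> 'a set) \<Rightarrow> bool" where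
  "atomic_structure M N A \<longleftrightarrow>
     ((\<exists>n. N = {..<n}) \<or> N = UNIV) \<and>
     (\<forall>i\<in>N. measure_atom M (A i) \<and> emeasure M (A i) = 1) \<and>
     disjoint_family_on A N \<and>
     (\<forall>B. B \<subseteq> space M - (\<Union>i\<in>N. A i) \<longrightarrow> \<not> measure_atom M B)"

definition nonatomic_part :: "'a measure \<Rightarrow> nat set \<Rightarrow> (nat \<Rightarrow> 'a set) \<Rightarrow> 'a set" where
  "nonatomic_part M N A = space M - (\<Union>i\<in>N. A i)"

text \<open>The suitable \<Delta>_2-condition.  In the degenerate case (\<mu>(\<Omega>_na)=0 and finitely many atoms,
  not covered by the paper) we declare it satisfied.\<close>
definition suitable_delta2 :: "'a measure \<Rightarrow> nat set \<Rightarrow> (nat \<Rightarrow> 'a set) \<Rightarrow> (real \<Rightarrow> real) \<Rightarrow> bool" where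
  "suitable_delta2 M N A \<Phi> =
     (let na = nonatomic_part M N A;
          na_cond = (if emeasure M na = \<infinity> then delta2_Rplus \<Phi> else delta2_infty \<Phi>)
      in if emeasure M na = 0 then (if finite N then True else delta2_zero \<Phi>)
         else (if finite N then na_cond else na_cond \<and> delta2_zero \<Phi>))"

definition sup_norm :: "(nat \<Rightarrow> real) \<Rightarrow> real" where
  "sup_norm z = (SUP n. \<bar>z n\<bar>)"

definition linfty :: "(nat \<Rightarrow> real) set" where
  "linfty = {z. bounded (range z)}"

end

theory Submission
  imports Defs
begin

text \<open>
  If \<open>\<Phi>\<close> fails the suitable \<open>\<Delta>\<^sub>2\<close>-condition then for all \<open>d, c > 0\<close> there are heights \<open>u\<close>
  (large, small, or arbitrary, according to which condition fails) with
  \<open>\<Phi>(u/(1+d)) < c \<Phi>(u)\<close>.  Using the non-atomic part (or the atoms) one places such heights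
  \<open>u\<^sub>n\<close> on pairwise disjoint sets \<open>E\<^sub>n\<close> with \<open>\<Phi>(u\<^sub>n) \<mu>(E\<^sub>n) \<ge> 1\<close> but
  \<open>\<Sum>\<^sub>n \<Phi>(u\<^sub>n/(1+d)) \<mu>(E\<^sub>n) \<le> d\<close>.  The operator \<open>P z = \<Sum>\<^sub>n z\<^sub>n u\<^sub>n 1\<^bsub>E\<^sub>n\<^esub>\<close> is linear and
  positive.  Since \<open>p(1,r) \<ge> max 1 r\<close>, the first condition forces \<open>\<parallel>P z\<parallel> \<ge> \<parallel>z\<parallel>\<^sub>\<infinity>\<close>; the second gives
  \<open>I\<^sub>\<Phi>(P z / ((1+d)\<parallel>z\<parallel>\<^sub>\<infinity>)) \<le> d\<close>, hence \<open>\<parallel>P z\<parallel> \<le> (1+d) p(1,d) \<parallel>z\<parallel>\<^sub>\<infinity> \<le> (1+d)\<^sup>2 \<parallel>z\<parallel>\<^sub>\<infinity>\<close>.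
\<close>

section \<open>Orlicz functions\<close>

lemma orlicz_function_nonneg: "orlicz_function \<Phi> \<Longrightarrow> 0 \<le> \<Phi> u"
  and orlicz_function_zero: "orlicz_function \<Phi> \<Longrightarrow> \<Phi> 0 = 0"
  by (simp_all add: orlicz_function_def)

lemma orlicz_function_abs: "orlicz_function \<Phi> \<Longrightarrow> \<Phi> \<bar>u\<bar> = \<Phi> u"
  unfolding orlicz_function_def by (cases "u \<ge> 0") auto

lemma orlicz_function_scale_le:
  assumes "orlicz_function \<Phi>" "0 \<le> l" "l \<le> 1"
  shows "\<Phi> (l * u) \<le> l * \<Phi> u"
proof -
  have "\<Phi> ((1 - l) *\<^sub>R 0 + l *\<^sub>R u) \<le> (1 - l) * \<Phi> 0 + l * \<Phi> u"
    using assms convex_onD[of UNIV \<Phi>] unfolding orlicz_function_def by blast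
  then show ?thesis
    using assms(1) by (simp add: orlicz_function_zero)
qed

lemma orlicz_function_mono:
  assumes "orlicz_function \<Phi>" "\<bar>u\<bar> \<le> \<bar>v\<bar>"
  shows "\<Phi> u \<le> \<Phi> v"
proof (cases "v = 0")
  case True
  then show ?thesis using assms by simp
next
  case False
  define l where "l = \<bar>u\<bar> / \<bar>v\<bar>"
  have l: "0 \<le> l" "l \<le> 1" using assms(2) False by (auto simp: l_def)
  have "\<Phi> u = \<Phi> (l * \<bar>v\<bar>)"
    using False orlicz_function_abs[OF assms(1), of u] by (simp add: l_def)
  also have "\<dots> \<le> l * \<Phi> \<bar>v\<bar>" by (rule orlicz_function_scale_le[OF assms(1) l])
  also have "\<dots> \<le> \<Phi> v"
    using l orlicz_function_nonneg[OF assms(1), of v] orlicz_function_abs[OF assms(1), of v]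
    by (simp add: mult_left_le_one_le)
  finally show ?thesis .
qed

lemma orlicz_function_superlinear:
  assumes "orlicz_function \<Phi>" "1 \<le> m"
  shows "m * \<Phi> u \<le> \<Phi> (m * u)"
proof -
  have "\<Phi> ((1 / m) * (m * u)) \<le> (1 / m) * \<Phi> (m * u)"
    using assms by (intro orlicz_function_scale_le) auto
  then show ?thesis using assms(2) by (simp add: field_simps)
qed

lemma orlicz_function_unbounded:
  assumes "orlicz_function \<Phi>"
  obtains v where "T \<le> \<Phi> v"
proof -
  obtain u where "\<Phi> u \<noteq> 0" using assms unfolding orlicz_function_def by auto
  then have pos: "0 < \<Phi> \<bar>u\<bar>"
    using orlicz_function_abs[OF assms] orlicz_function_nonneg[OF assms, of u] by simp
  define m where "m = max 1 (T / \<Phi> \<bar>u\<bar>)"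
  have "T \<le> m * \<Phi> \<bar>u\<bar>"
    using pos by (simp add: m_def pos_divide_le_eq max_def)
  also have "\<dots> \<le> \<Phi> (m * \<bar>u\<bar>)"
    by (rule orlicz_function_superlinear[OF assms]) (simp add: m_def)
  finally show ?thesis by (rule that)
qed

lemma orlicz_function_pos_of_ratio:
  assumes "orlicz_function \<Phi>" "\<Phi> v < c * \<Phi> u" "0 < c"
  shows "0 < \<Phi> u"
proof -
  have "0 < c * \<Phi> u" using assms(2) orlicz_function_nonneg[OF assms(1), of v] by linarith
  then show ?thesis using assms(3) by (simp add: zero_less_mult_iff)
qed

lemma orlicz_doubling_of_reverse_ratio:
  fixes \<Phi> :: "real \<Rightarrow> real"
  assumes \<Phi>: "orlicz_function \<Phi>" and d: "0 < d" and c: "0 < c"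
    and j: "2 \<le> (1 + d) ^ j" and v: "0 \<le> v"
    and reverse: "\<And>i. 1 \<le> i \<Longrightarrow> i \<le> j \<Longrightarrow>
      c * \<Phi> ((1 + d) ^ i * v) \<le> \<Phi> ((1 + d) ^ i * v / (1 + d))"
  shows "\<Phi> (2 * v) \<le> (1 / c) ^ j * \<Phi> v"
proof -
  have iter: "\<Phi> ((1 + d) ^ i * v) \<le> (1 / c) ^ i * \<Phi> v" if "i \<le> j" for i
    using that
  proof (induction i)
    case (Suc i)
    have "c * \<Phi> ((1 + d) ^ Suc i * v) \<le> \<Phi> ((1 + d) ^ i * v)"
      using reverse[of "Suc i"] Suc.prems d by simp
    also have "\<dots> \<le> (1 / c) ^ i * \<Phi> v" using Suc by simp
    finally show ?case using c by (simp add: field_simps)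
  qed simp
  have "\<Phi> (2 * v) \<le> \<Phi> ((1 + d) ^ j * v)"
    using j v by (intro orlicz_function_mono[OF \<Phi>]) (simp add: abs_mult mult_right_mono)
  also have "\<dots> \<le> (1 / c) ^ j * \<Phi> v" using iter by simp
  finally show ?thesis .
qed

lemma not_delta2_Rplus_ratio:
  assumes \<Phi>: "orlicz_function \<Phi>" and "\<not> delta2_Rplus \<Phi>" and d: "0 < d" and c: "0 < c"
  shows "\<exists>u\<ge>0. \<Phi> (u / (1 + d)) < c * \<Phi> u"
proof (rule ccontr)
  assume "\<not> ?thesis"
  then have reverse: "c * \<Phi> u \<le> \<Phi> (u / (1 + d))" if "0 \<le> u" for u
    using that by (meson not_less)
  obtain j where j: "2 \<le> (1 + d) ^ j"
    using real_arch_pow[of "1 + d" 2] d by (auto intro: less_imp_le)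
  have "\<Phi> (2 * v) \<le> (1 / c) ^ j * \<Phi> v" if "0 \<le> v" for v
    using d that by (intro orlicz_doubling_of_reverse_ratio[OF \<Phi> d c j] reverse) auto
  then have "delta2_Rplus \<Phi>"
    unfolding delta2_Rplus_def using c by (intro exI[of _ "(1 / c) ^ j"]) auto
  with assms(2) show False ..
qed

lemma not_delta2_infty_ratio:
  assumes \<Phi>: "orlicz_function \<Phi>" and "\<not> delta2_infty \<Phi>" and d: "0 < d" and c: "0 < c"
    and U: "0 < U"
  shows "\<exists>u\<ge>U. \<Phi> (u / (1 + d)) < c * \<Phi> u"
proof (rule ccontr)
  assume "\<not> ?thesis"
  then have reverse: "c * \<Phi> u \<le> \<Phi> (u / (1 + d))" if "U \<le> u" for u
    using that by (meson not_less)
  obtain j where j: "2 \<le> (1 + d) ^ j"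
    using real_arch_pow[of "1 + d" 2] d by (auto intro: less_imp_le)
  have "\<Phi> (2 * v) \<le> (1 / c) ^ j * \<Phi> v" if v: "U \<le> v" for v
  proof (rule orlicz_doubling_of_reverse_ratio[OF \<Phi> d c j])
    show "0 \<le> v" using U v by simp
    fix i :: nat
    have "v \<le> (1 + d) ^ i * v"
      using d U v by (simp add: mult_le_cancel_right1 one_le_power)
    then show "c * \<Phi> ((1 + d) ^ i * v) \<le> \<Phi> ((1 + d) ^ i * v / (1 + d))"
      using v by (intro reverse) simp
  qed
  then have "delta2_infty \<Phi>"
    unfolding delta2_infty_def using c U by (intro exI[of _ U] conjI exI[of _ "(1 / c) ^ j"]) auto
  with assms(2) show False ..
qed

lemma not_delta2_zero_ratio:
  assumes \<Phi>: "orlicz_function \<Phi>" and "\<not> delta2_zero \<Phi>" and d: "0 < d" and c: "0 < c"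
    and U: "0 < U"
  shows "\<exists>u. 0 \<le> u \<and> u \<le> U \<and> \<Phi> (u / (1 + d)) < c * \<Phi> u"
proof (rule ccontr)
  assume "\<not> ?thesis"
  then have reverse: "c * \<Phi> u \<le> \<Phi> (u / (1 + d))" if "0 \<le> u" "u \<le> U" for u
    using that by (meson not_less)
  obtain j where j: "2 \<le> (1 + d) ^ j"
    using real_arch_pow[of "1 + d" 2] d by (auto intro: less_imp_le)
  define u0 where "u0 = U / (1 + d) ^ j"
  have "\<Phi> (2 * v) \<le> (1 / c) ^ j * \<Phi> v" if v: "0 \<le> v" "v \<le> u0" for v
  proof (rule orlicz_doubling_of_reverse_ratio[OF \<Phi> d c j v(1)])
    fix i :: nat assume "i \<le> j"
    then have "(1 + d) ^ i * v \<le> (1 + d) ^ j * u0"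
      using d v by (intro mult_mono power_increasing) auto
    also have "\<dots> = U" using d by (simp add: u0_def)
    finally show "c * \<Phi> ((1 + d) ^ i * v) \<le> \<Phi> ((1 + d) ^ i * v / (1 + d))"
      using d v by (intro reverse) auto
  qed
  moreover have "0 < u0" using d U by (simp add: u0_def)
  ultimately have "delta2_zero \<Phi>"
    unfolding delta2_zero_def using c by (intro exI[of _ u0] conjI exI[of _ "(1 / c) ^ j"]) auto
  with assms(2) show False ..
qed

section \<open>Lattice norms and the Orlicz norm\<close>

lemma lattice_norm_scale: "lattice_norm p \<Longrightarrow> p (c *\<^sub>R x) = \<bar>c\<bar> * p x"
  and lattice_norm_triangle: "lattice_norm p \<Longrightarrow> p (x + y) \<le> p x + p y"
  and lattice_norm_mono:
    "lattice_norm p \<Longrightarrow> \<bar>u\<bar> \<le> \<bar>u'\<bar> \<Longrightarrow> \<bar>v\<bar> \<le> \<bar>v'\<bar> \<Longrightarrow> p (u, v) \<le> p (u', v')"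
  unfolding lattice_norm_def by blast+

lemma lattice_norm_nonneg:
  assumes "lattice_norm p"
  shows "0 \<le> p x"
proof -
  have "p 0 \<le> p x + p (- x)"
    using lattice_norm_triangle[OF assms, of x "- x"] by simp
  moreover have "p (- x) = p x"
    using lattice_norm_scale[OF assms, of "- 1" x] by simp
  moreover have "p 0 = 0" using assms unfolding lattice_norm_def by blast
  ultimately show ?thesis by simp
qed

lemma lattice_norm_vertical: "lattice_norm p \<Longrightarrow> p (0, r) = \<bar>r\<bar> * p (0, 1)"
  using lattice_norm_scale[of p r "(0, 1)"] by simp

lemma lattice_norm_max_le:
  assumes "lattice_norm p" "p (1, 0) = 1" "p (0, 1) = 1"
  shows "max 1 \<bar>r\<bar> \<le> p (1, r)"
  using lattice_norm_mono[OF assms(1), of 1 1 0 r] lattice_norm_mono[OF assms(1), of 0 1 r r]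
    lattice_norm_vertical[OF assms(1), of r] assms(2,3) by simp

lemma lattice_norm_le_add:
  assumes "lattice_norm p" "p (1, 0) = 1" "p (0, 1) = 1"
  shows "p (1, r) \<le> 1 + \<bar>r\<bar>"
  using lattice_norm_triangle[OF assms(1), of "(1, 0)" "(0, r)"]
    lattice_norm_vertical[OF assms(1), of r] assms(2,3) by simp

lemma orlicz_norm_le:
  assumes "lattice_norm p" "0 < k" "I_Phi M \<Phi> (\<lambda>t. k * x t) < \<infinity>"
  shows "orlicz_norm M \<Phi> p x \<le> p (1, enn2real (I_Phi M \<Phi> (\<lambda>t. k * x t))) / k"
proof -
  have "bdd_below {(1 / k) * p (1, enn2real (I_Phi M \<Phi> (\<lambda>t. k * x t))) |k.
      0 < k \<and> I_Phi M \<Phi> (\<lambda>t. k * x t) < \<infinity>}"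
    using lattice_norm_nonneg[OF assms(1)] by (intro bdd_belowI[of _ 0]) auto
  then have "orlicz_norm M \<Phi> p x \<le> (1 / k) * p (1, enn2real (I_Phi M \<Phi> (\<lambda>t. k * x t)))"
    unfolding orlicz_norm_def by (rule cInf_lower[rotated]) (use assms(2,3) in auto)
  then show ?thesis by simp
qed

lemma orlicz_norm_ge:
  assumes "0 < k\<^sub>0" "I_Phi M \<Phi> (\<lambda>t. k\<^sub>0 * x t) < \<infinity>"
    and "\<And>k. 0 < k \<Longrightarrow> I_Phi M \<Phi> (\<lambda>t. k * x t) < \<infinity> \<Longrightarrow>
      s \<le> p (1, enn2real (I_Phi M \<Phi> (\<lambda>t. k * x t))) / k"
  shows "s \<le> orlicz_norm M \<Phi> p x"
  unfolding orlicz_norm_def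
proof (rule cInf_greatest)
  show "{(1 / k) * p (1, enn2real (I_Phi M \<Phi> (\<lambda>t. k * x t))) |k.
      0 < k \<and> I_Phi M \<Phi> (\<lambda>t. k * x t) < \<infinity>} \<noteq> {}"
    using assms(1,2) by blast
qed (use assms(3) in auto)

lemma linfty_abs_le_sup_norm:
  assumes "z \<in> linfty"
  shows "\<bar>z n\<bar> \<le> sup_norm z"
proof -
  obtain B where "\<And>n. \<bar>z n\<bar> \<le> B" using assms unfolding linfty_def bounded_iff by auto
  then show ?thesis unfolding sup_norm_def by (intro cSUP_upper bdd_aboveI[of _ B]) auto
qed

lemma linfty_sup_norm_nonneg: "z \<in> linfty \<Longrightarrow> 0 \<le> sup_norm z"
  using linfty_abs_le_sup_norm[of z 0] by linarith

section \<open>Block operators\<close>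

definition block_operator :: "(nat \<Rightarrow> 'a set) \<Rightarrow> (nat \<Rightarrow> real) \<Rightarrow> (nat \<Rightarrow> real) \<Rightarrow> 'a \<Rightarrow> real"
  where "block_operator E u z t = (\<Sum>n. z n * u n * indicator (E n) t)"

lemma suminf_indicator_disjoint_family:
  fixes f :: "nat \<Rightarrow> 'b::{t2_space,comm_monoid_add,semiring_1}"
  assumes "disjoint_family E" "t \<in> E m"
  shows "(\<Sum>n. f n * indicator (E n) t) = f m"
proof -
  have "(\<lambda>n. f n * indicator (E n) t) = (\<lambda>n. if n = m then f n else 0)"
  proof
    fix n show "f n * indicator (E n) t = (if n = m then f n else 0)"
      using assms unfolding disjoint_family_on_def by (cases "n = m") (auto simp: indicator_def)
  qed
  then show ?thesis using sums_unique[OF sums_single[of m f]] by metis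
qed

lemma block_operator_in: "disjoint_family E \<Longrightarrow> t \<in> E m \<Longrightarrow> block_operator E u z t = z m * u m"
  unfolding block_operator_def by (rule suminf_indicator_disjoint_family)

lemma block_operator_notin: "t \<notin> (\<Union>n. E n) \<Longrightarrow> block_operator E u z t = 0"
  by (simp add: block_operator_def)

lemma block_operator_linear:
  assumes "disjoint_family E"
  shows "block_operator E u (\<lambda>n. a * z n + b * w n) t = a * block_operator E u z t + b * block_operator E u w t"
proof (cases "t \<in> (\<Union>n. E n)")
  case True
  then obtain m where "t \<in> E m" by blast
  then show ?thesis by (simp add: block_operator_in[OF assms] algebra_simps)
qed (simp add: block_operator_notin)

lemma block_operator_nonneg:
  assumes "disjoint_family E" "\<And>n. 0 \<le> u n" "\<And>n. 0 \<le> z n"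
  shows "0 \<le> block_operator E u z t"
proof (cases "t \<in> (\<Union>n. E n)")
  case True
  then obtain m where "t \<in> E m" by blast
  then show ?thesis by (simp add: block_operator_in[OF assms(1)] assms(2,3))
qed (simp add: block_operator_notin)

lemma borel_measurable_block_operator:
  "(\<And>n. E n \<in> sets M) \<Longrightarrow> block_operator E u z \<in> borel_measurable M"
  unfolding block_operator_def by (intro borel_measurable_suminf) auto

lemma I_Phi_block_operator:
  assumes \<Phi>: "orlicz_function \<Phi>" and E: "disjoint_family E" "\<And>n. E n \<in> sets M"
  shows "I_Phi M \<Phi> (\<lambda>t. k * block_operator E u z t)
    = (\<Sum>n. ennreal (\<Phi> (k * (z n * u n))) * emeasure M (E n))"
proof -
  have "ennreal (\<Phi> (k * block_operator E u z t))
      = (\<Sum>n. ennreal (\<Phi> (k * (z n * u n))) * indicator (E n) t)" for t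
  proof (cases "t \<in> (\<Union>n. E n)")
    case True
    then obtain m where m: "t \<in> E m" by blast
    show ?thesis
      by (simp add: block_operator_in[OF E(1) m] suminf_indicator_disjoint_family[OF E(1) m])
  next
    case False
    then show ?thesis
      using block_operator_notin[OF False] orlicz_function_zero[OF \<Phi>] by simp
  qed
  then have "I_Phi M \<Phi> (\<lambda>t. k * block_operator E u z t)
      = (\<Sum>n. \<integral>\<^sup>+ t. ennreal (\<Phi> (k * (z n * u n))) * indicator (E n) t \<partial>M)"
    unfolding I_Phi_def using E(2) by (simp add: nn_integral_suminf)
  also have "\<dots> = (\<Sum>n. ennreal (\<Phi> (k * (z n * u n))) * emeasure M (E n))"
    using E(2) by (simp add: nn_integral_cmult_indicator)
  finally show ?thesis .
qed

lemma I_Phi_block_operator_ge_term: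
  assumes "orlicz_function \<Phi>" "disjoint_family E" "\<And>n. E n \<in> sets M"
  shows "ennreal (\<Phi> (k * (z n * u n))) * emeasure M (E n) \<le> I_Phi M \<Phi> (\<lambda>t. k * block_operator E u z t)"
  unfolding I_Phi_block_operator[OF assms]
  using sum_le_suminf[of "\<lambda>n. ennreal (\<Phi> (k * (z n * u n))) * emeasure M (E n)" "{n}"] by simp

lemma block_operator_coordinate_le_I_Phi:
  assumes \<Phi>: "orlicz_function \<Phi>" and E: "disjoint_family E" "\<And>n. E n \<in> sets M"
    and u: "0 \<le> u n" and large: "1 \<le> ennreal (\<Phi> (u n)) * emeasure M (E n)"
    and k: "0 < k" "1 \<le> k * \<bar>z n\<bar>"
  shows "ennreal (k * \<bar>z n\<bar>) \<le> I_Phi M \<Phi> (\<lambda>t. k * block_operator E u z t)"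
proof -
  let ?m = "k * \<bar>z n\<bar>"
  have "ennreal ?m \<le> ennreal ?m * (ennreal (\<Phi> (u n)) * emeasure M (E n))"
    using mult_left_mono[OF large, of "ennreal ?m"] by simp
  also have "\<dots> = ennreal (?m * \<Phi> (u n)) * emeasure M (E n)"
    using k orlicz_function_nonneg[OF \<Phi>] by (simp add: ennreal_mult mult.assoc)
  also have "\<dots> \<le> ennreal (\<Phi> (?m * u n)) * emeasure M (E n)"
    by (intro mult_right_mono ennreal_leI orlicz_function_superlinear[OF \<Phi> k(2)]) simp
  also have "\<Phi> (?m * u n) = \<Phi> (k * (z n * u n))"
    using orlicz_function_abs[OF \<Phi>, of "k * (z n * u n)"] k u by (simp add: abs_mult mult.assoc)
  also have "ennreal (\<Phi> (k * (z n * u n))) * emeasure M (E n) \<le> I_Phi M \<Phi> (\<lambda>t. k * block_operator E u z t)"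
    by (rule I_Phi_block_operator_ge_term[OF \<Phi> E])
  finally show ?thesis .
qed

lemma I_Phi_block_operator_le:
  assumes \<Phi>: "orlicz_function \<Phi>" and E: "disjoint_family E" "\<And>n. E n \<in> sets M"
    and u: "\<And>n. 0 \<le> u n" and bound: "\<And>n. \<bar>k * z n\<bar> \<le> r"
  shows "I_Phi M \<Phi> (\<lambda>t. k * block_operator E u z t) \<le> (\<Sum>n. ennreal (\<Phi> (r * u n)) * emeasure M (E n))"
  unfolding I_Phi_block_operator[OF \<Phi> E]
proof (intro suminf_le summableI mult_right_mono ennreal_leI orlicz_function_mono[OF \<Phi>])
  fix n
  have "\<bar>k * z n\<bar> * u n \<le> r * u n"
    using bound[of n] u[of n] by (rule mult_right_mono)
  then show "\<bar>k * (z n * u n)\<bar> \<le> \<bar>r * u n\<bar>"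
    using u[of n] order_trans[OF abs_ge_zero bound[of n]] by (simp add: abs_mult mult.assoc)
qed simp

lemma I_Phi_block_operator_le_sum:
  assumes \<Phi>: "orlicz_function \<Phi>" and E: "disjoint_family E" "\<And>n. E n \<in> sets M"
    and u: "\<And>n. 0 \<le> u n" and small: "(\<Sum>n. ennreal (\<Phi> (u n / (1 + d))) * emeasure M (E n)) \<le> d"
    and d: "0 < d" and z: "z \<in> linfty" "sup_norm z < s"
  shows "I_Phi M \<Phi> (\<lambda>t. 1 / ((1 + d) * s) * block_operator E u z t) \<le> d"
proof -
  have s: "0 < s" using linfty_sup_norm_nonneg[OF z(1)] z(2) by linarith
  have "\<bar>1 / ((1 + d) * s) * z n\<bar> \<le> 1 / (1 + d)" for n
  proof -
    have "\<bar>1 / ((1 + d) * s) * z n\<bar> = \<bar>z n\<bar> / ((1 + d) * s)"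
      using d s by (simp add: abs_mult)
    also have "\<dots> \<le> s / ((1 + d) * s)"
      using linfty_abs_le_sup_norm[OF z(1), of n] z(2) d s by (intro divide_right_mono) auto
    also have "\<dots> = 1 / (1 + d)" using s by simp
    finally show ?thesis .
  qed
  then have "I_Phi M \<Phi> (\<lambda>t. 1 / ((1 + d) * s) * block_operator E u z t)
      \<le> (\<Sum>n. ennreal (\<Phi> (1 / (1 + d) * u n)) * emeasure M (E n))"
    by (rule I_Phi_block_operator_le[OF \<Phi> E u])
  also have "\<dots> \<le> d" using small by simp
  finally show ?thesis .
qed

lemma sup_norm_le_orlicz_norm_block_operator:
  assumes \<Phi>: "orlicz_function \<Phi>" and p: "lattice_norm p" "p (1, 0) = 1" "p (0, 1) = 1"
    and E: "disjoint_family E" "\<And>n. E n \<in> sets M"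
    and u: "\<And>n. 0 \<le> u n" and large: "\<And>n. 1 \<le> ennreal (\<Phi> (u n)) * emeasure M (E n)"
    and z: "z \<in> linfty" and k\<^sub>0: "0 < k\<^sub>0" "I_Phi M \<Phi> (\<lambda>t. k\<^sub>0 * block_operator E u z t) < \<infinity>"
  shows "sup_norm z \<le> orlicz_norm M \<Phi> p (block_operator E u z)"
proof (rule orlicz_norm_ge[OF k\<^sub>0])
  fix k assume k: "0 < k" "I_Phi M \<Phi> (\<lambda>t. k * block_operator E u z t) < \<infinity>"
  define r where "r = enn2real (I_Phi M \<Phi> (\<lambda>t. k * block_operator E u z t))"
  have "k * \<bar>z n\<bar> \<le> p (1, r)" for n
  proof (cases "1 \<le> k * \<bar>z n\<bar>")
    case True
    have "ennreal (k * \<bar>z n\<bar>) \<le> ennreal r"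
      using block_operator_coordinate_le_I_Phi[of \<Phi> E M u n k z, OF \<Phi> E u large k(1) True] k(2)
      by (simp add: r_def ennreal_enn2real_if)
    then have "k * \<bar>z n\<bar> \<le> r" by (simp add: r_def)
    then show ?thesis using lattice_norm_max_le[OF p, of r] by linarith
  next
    case False
    then show ?thesis using lattice_norm_max_le[OF p, of r] by simp
  qed
  then show "sup_norm z \<le> p (1, r) / k"
    unfolding sup_norm_def using k(1) by (intro cSUP_least) (auto simp: field_simps)
qed

lemma orlicz_norm_block_operator_le:
  assumes \<Phi>: "orlicz_function \<Phi>" and p: "lattice_norm p" "p (1, 0) = 1" "p (0, 1) = 1"
    and E: "disjoint_family E" "\<And>n. E n \<in> sets M"
    and u: "\<And>n. 0 \<le> u n" and small: "(\<Sum>n. ennreal (\<Phi> (u n / (1 + d))) * emeasure M (E n)) \<le> d"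
    and d: "0 < d" and z: "z \<in> linfty"
  shows "orlicz_norm M \<Phi> p (block_operator E u z) \<le> (1 + d)\<^sup>2 * sup_norm z"
proof (rule field_le_epsilon)
  fix e :: real assume e: "0 < e"
  define s where "s = sup_norm z + e / (1 + d)\<^sup>2"
  define k where "k = 1 / ((1 + d) * s)"
  have "0 < e / (1 + d)\<^sup>2" using e d by simp
  then have s: "sup_norm z < s" "0 < s" using linfty_sup_norm_nonneg[OF z] by (auto simp: s_def)
  have k: "0 < k" using d s by (simp add: k_def)
  have I: "I_Phi M \<Phi> (\<lambda>t. k * block_operator E u z t) \<le> d"
    unfolding k_def by (rule I_Phi_block_operator_le_sum[OF \<Phi> E u small d z s(1)])
  define r where "r = enn2real (I_Phi M \<Phi> (\<lambda>t. k * block_operator E u z t))"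
  have "r \<le> d" using I d by (simp add: r_def enn2real_leI)
  then have "p (1, r) \<le> 1 + d" using lattice_norm_le_add[OF p, of r] by (simp add: r_def)
  moreover have "orlicz_norm M \<Phi> p (block_operator E u z) \<le> p (1, r) / k"
    unfolding r_def using I k by (intro orlicz_norm_le[OF p(1)]) (auto intro: le_less_trans)
  ultimately have "orlicz_norm M \<Phi> p (block_operator E u z) \<le> (1 + d) / k"
    using k by (meson divide_right_mono less_imp_le order_trans)
  also have "\<dots> = (1 + d)\<^sup>2 * s" by (simp add: k_def power2_eq_square)
  also have "\<dots> = (1 + d)\<^sup>2 * sup_norm z + e"
    using d by (simp add: s_def distrib_left)
  finally show "orlicz_norm M \<Phi> p (block_operator E u z) \<le> (1 + d)\<^sup>2 * sup_norm z + e" .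
qed

definition almost_isometric_linfty_embedding ::
    "'a measure \<Rightarrow> (real \<Rightarrow> real) \<Rightarrow> (real \<times> real \<Rightarrow> real) \<Rightarrow> real \<Rightarrow>
      ((nat \<Rightarrow> real) \<Rightarrow> 'a \<Rightarrow> real) \<Rightarrow> bool"
  where "almost_isometric_linfty_embedding M \<Phi> p \<epsilon> P \<longleftrightarrow>
    (\<forall>z\<in>linfty. P z \<in> orlicz_space M \<Phi>) \<and>
    (\<forall>z\<in>linfty. \<forall>w\<in>linfty. \<forall>a b.
       AE t in M. P (\<lambda>n. a * z n + b * w n) t = a * P z t + b * P w t) \<and>
    (\<forall>z\<in>linfty. (\<forall>n. 0 \<le> z n) \<longrightarrow> (AE t in M. 0 \<le> P z t)) \<and>
    (\<forall>z\<in>linfty. sup_norm z \<le> orlicz_norm M \<Phi> p (P z) \<and>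
       orlicz_norm M \<Phi> p (P z) \<le> (1 + \<epsilon>) * sup_norm z)"

lemma almost_isometric_linfty_embedding_block_operator:
  assumes \<Phi>: "orlicz_function \<Phi>" and p: "lattice_norm p" "p (1, 0) = 1" "p (0, 1) = 1"
    and E: "disjoint_family E" "\<And>n. E n \<in> sets M"
    and u: "\<And>n. 0 \<le> u n" and large: "\<And>n. 1 \<le> ennreal (\<Phi> (u n)) * emeasure M (E n)"
    and small: "(\<Sum>n. ennreal (\<Phi> (u n / (1 + d))) * emeasure M (E n)) \<le> d"
    and d: "0 < d" "(1 + d)\<^sup>2 \<le> 1 + \<epsilon>"
  shows "almost_isometric_linfty_embedding M \<Phi> p \<epsilon> (block_operator E u)"
  unfolding almost_isometric_linfty_embedding_def
proof (intro conjI ballI allI impI)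
  fix z assume z: "z \<in> linfty"
  define k where "k = 1 / ((1 + d) * (sup_norm z + 1))"
  have k: "0 < k" "I_Phi M \<Phi> (\<lambda>t. k * block_operator E u z t) < \<infinity>"
    using linfty_sup_norm_nonneg[OF z] d
      I_Phi_block_operator_le_sum[OF \<Phi> E u small d(1) z, of "sup_norm z + 1"]
    by (auto simp: k_def intro: le_less_trans)
  then show "block_operator E u z \<in> orlicz_space M \<Phi>"
    unfolding orlicz_space_def using borel_measurable_block_operator[of E M u z] E(2) by blast
  show "sup_norm z \<le> orlicz_norm M \<Phi> p (block_operator E u z)"
    by (rule sup_norm_le_orlicz_norm_block_operator[OF \<Phi> p E u large z k])
  have "orlicz_norm M \<Phi> p (block_operator E u z) \<le> (1 + d)\<^sup>2 * sup_norm z"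
    by (rule orlicz_norm_block_operator_le[OF \<Phi> p E u small d(1) z])
  also have "\<dots> \<le> (1 + \<epsilon>) * sup_norm z"
    using d(2) linfty_sup_norm_nonneg[OF z] by (rule mult_right_mono)
  finally show "orlicz_norm M \<Phi> p (block_operator E u z) \<le> (1 + \<epsilon>) * sup_norm z" .
next
  fix z w :: "nat \<Rightarrow> real" and a b :: real
  show "AE t in M. block_operator E u (\<lambda>n. a * z n + b * w n) t
      = a * block_operator E u z t + b * block_operator E u w t"
    by (simp add: block_operator_linear[OF E(1)])
next
  fix z :: "nat \<Rightarrow> real" assume "\<forall>n. 0 \<le> z n"
  then show "AE t in M. 0 \<le> block_operator E u z t"
    using block_operator_nonneg[OF E(1) u] by simp
qed

lemma disjoint_family_stepwise:
  assumes "Inv 0 {}"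
    and step: "\<And>n U. Inv n U \<Longrightarrow> \<exists>E. E \<inter> U = {} \<and> Q n U E \<and> Inv (Suc n) (U \<union> E)"
  obtains E where "disjoint_family E" "\<And>n. Q n (\<Union>m<n. E m) (E n)" "\<And>n. Inv n (\<Union>m<n. E m)"
proof -
  define next_set where "next_set n U = (SOME E. E \<inter> U = {} \<and> Q n U E \<and> Inv (Suc n) (U \<union> E))" for n U
  define Us where "Us = rec_nat {} (\<lambda>n U. U \<union> next_set n U)"
  define E where "E n = next_set n (Us n)" for n
  have Us: "Us n = (\<Union>m<n. E m)" for n
    by (induction n) (simp_all add: Us_def E_def lessThan_Suc Un_commute)
  have choice: "E n \<inter> Us n = {} \<and> Q n (Us n) (E n) \<and> Inv (Suc n) (Us n \<union> E n)"
    if "Inv n (Us n)" for n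
    unfolding E_def next_set_def by (rule someI_ex[OF step[OF that]])
  have Inv: "Inv n (Us n)" for n
    by (induction n) (use assms(1) choice in \<open>simp_all add: Us_def E_def\<close>)
  have E: "E n \<inter> Us n = {}" "Q n (Us n) (E n)" for n
    using choice[OF Inv] by simp_all
  have "E m \<inter> E n = {}" if "m < n" for m n
    using E[of n] that unfolding Us by blast
  then have "disjoint_family E"
    unfolding disjoint_family_on_def by (metis Int_commute nat_neq_iff)
  then show thesis using that E Inv unfolding Us by blast
qed

definition orlicz_block :: "'a measure \<Rightarrow> (real \<Rightarrow> real) \<Rightarrow> real \<Rightarrow> real \<Rightarrow> 'a set \<Rightarrow> real \<Rightarrow> bool"
  where "orlicz_block M \<Phi> d c E u \<longleftrightarrow> E \<in> sets M \<and> 0 \<le> u \<and>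
    1 \<le> ennreal (\<Phi> u) * emeasure M E \<and> ennreal (\<Phi> (u / (1 + d))) * emeasure M E \<le> ennreal c"

lemma orlicz_blockI:
  assumes \<Phi>: "orlicz_function \<Phi>" and "E \<in> sets M" "0 \<le> u"
    and ratio: "\<Phi> (u / (1 + d)) < c * \<Phi> u"
    and E: "ennreal (1 / \<Phi> u) \<le> emeasure M E" "emeasure M E \<le> ennreal (2 / \<Phi> u)"
  shows "orlicz_block M \<Phi> d (2 * c) E u"
proof -
  have "0 < c * \<Phi> u"
    using ratio orlicz_function_nonneg[OF \<Phi>, of "u / (1 + d)"] by linarith
  then have pos: "0 < \<Phi> u" "0 < c"
    using orlicz_function_nonneg[OF \<Phi>, of u] by (auto simp: zero_less_mult_iff)
  have "ennreal 1 = ennreal (\<Phi> u) * ennreal (1 / \<Phi> u)"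
    using pos by (simp flip: ennreal_mult)
  also have "\<dots> \<le> ennreal (\<Phi> u) * emeasure M E"
    using E(1) pos by (intro mult_left_mono) simp_all
  finally have lower: "1 \<le> ennreal (\<Phi> u) * emeasure M E" by simp
  have "ennreal (\<Phi> (u / (1 + d))) * emeasure M E \<le> ennreal (\<Phi> (u / (1 + d))) * ennreal (2 / \<Phi> u)"
    using E(2) pos by (intro mult_left_mono) simp_all
  also have "\<dots> = ennreal (2 * (\<Phi> (u / (1 + d)) / \<Phi> u))"
    using orlicz_function_nonneg[OF \<Phi>] pos by (simp add: ennreal_mult[symmetric])
  also have "\<dots> \<le> ennreal (2 * c)"
    using ratio pos by (intro ennreal_leI) (simp add: divide_le_eq)
  finally show ?thesis using assms(2,3) lower unfolding orlicz_block_def by simp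
qed

lemma almost_isometric_linfty_embedding_of_blocks:
  fixes Inv :: "nat \<Rightarrow> 'a set \<Rightarrow> bool"
  assumes \<Phi>: "orlicz_function \<Phi>" and p: "lattice_norm p" "p (1, 0) = 1" "p (0, 1) = 1"
    and \<epsilon>: "0 < \<epsilon>" and "Inv 0 {}"
    and step: "\<And>d c n U. 0 < d \<Longrightarrow> 0 < c \<Longrightarrow> Inv n U \<Longrightarrow>
      \<exists>E u. E \<inter> U = {} \<and> orlicz_block M \<Phi> d c E u \<and> Inv (Suc n) (U \<union> E)"
  shows "\<exists>P. almost_isometric_linfty_embedding M \<Phi> p \<epsilon> P"
proof -
  define d where "d = min 1 \<epsilon> / 3"
  have d: "0 < d" "(1 + d)\<^sup>2 \<le> 1 + \<epsilon>"
  proof -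
    show "0 < d" using \<epsilon> by (simp add: d_def)
    have "d \<le> 1" by (simp add: d_def)
    then have "d * d \<le> d" using \<open>0 < d\<close> by (simp add: mult_left_le_one_le)
    moreover have "3 * d \<le> \<epsilon>" by (simp add: d_def)
    ultimately show "(1 + d)\<^sup>2 \<le> 1 + \<epsilon>" by (simp add: power2_eq_square algebra_simps)
  qed
  obtain E where E: "disjoint_family E"
    and blocks: "\<And>n. \<exists>u. orlicz_block M \<Phi> d (d * (1 / 2) ^ Suc n) (E n) u"
  proof (rule disjoint_family_stepwise[of Inv])
    show "\<And>n U. Inv n U \<Longrightarrow> \<exists>E. E \<inter> U = {} \<and> (\<exists>u. orlicz_block M \<Phi> d (d * (1 / 2) ^ Suc n) E u)
        \<and> Inv (Suc n) (U \<union> E)"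
      using step d(1) by (metis zero_less_divide_1_iff zero_less_numeral zero_less_power mult_pos_pos)
  qed (use assms(6) in blast)+
  then obtain u where u: "\<And>n. orlicz_block M \<Phi> d (d * (1 / 2) ^ Suc n) (E n) (u n)"
    by metis
  have "(\<Sum>n. ennreal (\<Phi> (u n / (1 + d))) * emeasure M (E n)) \<le> (\<Sum>n. ennreal (d * (1 / 2) ^ Suc n))"
    using u by (intro suminf_le summableI) (simp add: orlicz_block_def)
  also have "\<dots> = ennreal d"
    using d(1) sums_mult[OF power_half_series, of d]
    by (subst suminf_ennreal2) (auto simp: sums_iff)
  finally have "almost_isometric_linfty_embedding M \<Phi> p \<epsilon> (block_operator E u)"
    by (intro almost_isometric_linfty_embedding_block_operator[OF \<Phi> p E _ _ _ _ d])
      (use u in \<open>auto simp: orlicz_block_def\<close>)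
  then show ?thesis by blast
qed

section \<open>Atomless measures\<close>

lemma emeasure_subset_finite: "A \<subseteq> B \<Longrightarrow> B \<in> sets M \<Longrightarrow> emeasure M B < \<infinity> \<Longrightarrow> emeasure M A < \<infinity>"
  by (meson emeasure_mono order.strict_trans1)

lemma finite_emeasure_eq_measure: "emeasure M A < \<infinity> \<Longrightarrow> emeasure M A = ennreal (measure M A)"
  by (simp add: emeasure_eq_ennreal_measure less_top)

lemma atomless_split_half:
  assumes atomless: "\<And>B. B \<subseteq> S \<Longrightarrow> \<not> measure_atom M B"
    and D: "D \<in> sets M" "D \<subseteq> S" "0 < emeasure M D" "emeasure M D < \<infinity>"
  obtains C where "C \<in> sets M" "C \<subseteq> D" "0 < measure M C" "2 * measure M C \<le> measure M D"
proof -
  obtain C where C: "C \<in> sets M" "C \<subseteq> D" "emeasure M C \<noteq> 0" "emeasure M (D - C) \<noteq> 0"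
    using atomless[OF D(2)] D(1,3) unfolding measure_atom_def by blast
  have fin: "emeasure M C < \<infinity>" "emeasure M (D - C) < \<infinity>"
    using C(1,2) D(1,4) by (meson Diff_subset emeasure_subset_finite)+
  then have pos: "0 < measure M C" "0 < measure M (D - C)"
    using C(3,4) by (metis finite_emeasure_eq_measure ennreal_0 zero_less_measure_iff)+
  have "measure M D = measure M C + measure M (D - C)"
    using C(1,2) D(1) fin by (subst measure_Union[symmetric]) (auto simp: Un_absorb1)
  then show thesis
    using that[of C] that[of "D - C"] C(1,2) D(1) pos by (cases "2 * measure M C \<le> measure M D") auto
qed

lemma atomless_small_subset:
  assumes M: "sigma_finite_measure M" and atomless: "\<And>B. B \<subseteq> S \<Longrightarrow> \<not> measure_atom M B"
    and D: "D \<in> sets M" "D \<subseteq> S" "0 < emeasure M D" and \<eta>: "0 < \<eta>"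
  obtains C where "C \<in> sets M" "C \<subseteq> D" "0 < measure M C" "measure M C \<le> \<eta>" "emeasure M C < \<infinity>"
proof -
  obtain D' where D': "D' \<in> sets M" "D' \<subseteq> D" "0 < emeasure M D'" "emeasure M D' < \<infinity>"
  proof (cases "emeasure M D = \<infinity>")
    case True
    from sigma_finite_measure.approx_PInf_emeasure_with_finite[OF M D(1) True, of 0]
    obtain Z where "Z \<in> sets M" "Z \<subseteq> D" "emeasure M Z < \<infinity>" "emeasure M Z > 0" by auto
    then show thesis using that by blast
  next
    case False
    then show thesis using that[of D] D by (simp add: less_top)
  qed
  have halves: "\<exists>C. C \<in> sets M \<and> C \<subseteq> D' \<and> 0 < measure M C \<and> 2 ^ k * measure M C \<le> measure M D'" for k
  proof (induction k)
    case 0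
    have "0 < measure M D'"
      using D'(3) finite_emeasure_eq_measure[OF D'(4)] by (simp add: zero_less_measure_iff)
    then show ?case using D'(1) by (intro exI[of _ D']) simp
  next
    case (Suc k)
    then obtain C where C: "C \<in> sets M" "C \<subseteq> D'" "0 < measure M C" "2 ^ k * measure M C \<le> measure M D'"
      by blast
    have fin: "emeasure M C < \<infinity>"
      using C(2) D'(1,4) by (rule emeasure_subset_finite)
    have "C \<subseteq> S" "0 < emeasure M C"
      using C(2,3) D'(2) D(2) finite_emeasure_eq_measure[OF fin] by auto
    then obtain C' where C': "C' \<in> sets M" "C' \<subseteq> C" "0 < measure M C'" "2 * measure M C' \<le> measure M C"
      using atomless_split_half[OF atomless C(1) _ _ fin] by metis
    have "2 ^ Suc k * measure M C' = 2 ^ k * (2 * measure M C')" by simp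
    also have "\<dots> \<le> 2 ^ k * measure M C" using C'(4) by simp
    also have "\<dots> \<le> measure M D'" by (rule C(4))
    finally show ?case using C' C(2) by (intro exI[of _ C']) auto
  qed
  obtain k :: nat where "measure M D' / \<eta> < 2 ^ k"
    using real_arch_pow[of 2 "measure M D' / \<eta>"] by auto
  then have k: "measure M D' < 2 ^ k * \<eta>" using \<eta> by (simp add: field_simps)
  obtain C where C: "C \<in> sets M" "C \<subseteq> D'" "0 < measure M C" "2 ^ k * measure M C \<le> measure M D'"
    using halves[of k] by blast
  then have "measure M C \<le> \<eta>" using k by (smt (verit) mult_le_cancel_left_pos zero_less_power)
  moreover have "emeasure M C < \<infinity>"
    using C(2) D'(1,4) by (rule emeasure_subset_finite)
  ultimately show thesis
    using that C(1,3) C(2) D'(2) by (meson order.trans)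
qed

lemma exists_almost_largest_subset:
  assumes "0 \<le> a"
  shows "\<exists>D. D \<in> sets M \<and> D \<subseteq> R \<and> measure M D \<le> a \<and>
    (\<forall>D'. D' \<in> sets M \<and> D' \<subseteq> R \<and> measure M D' \<le> a \<longrightarrow> measure M D' \<le> 2 * measure M D)"
proof -
  define T where "T = measure M ` {D \<in> sets M. D \<subseteq> R \<and> measure M D \<le> a}"
  have T: "0 \<in> T" "bdd_above T" "\<And>x. x \<in> T \<Longrightarrow> x \<le> Sup T"
    using assms by (auto simp: T_def intro!: image_eqI[of 0 _ "{}"] bdd_aboveI[of _ a] cSup_upper)
  show ?thesis
  proof (cases "Sup T \<le> 0")
    case True
    have "measure M D' \<le> 2 * measure M {}" if "D' \<in> sets M \<and> D' \<subseteq> R \<and> measure M D' \<le> a" for D'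
      using T(3)[of "measure M D'"] that True unfolding T_def by auto
    then show ?thesis using assms by (intro exI[of _ "{}"]) auto
  next
    case False
    then obtain x where "x \<in> T" "Sup T / 2 < x" using less_cSup_iff[of T "Sup T / 2"] T(1,2) by auto
    then obtain D where D: "D \<in> sets M" "D \<subseteq> R" "measure M D \<le> a" "Sup T / 2 < measure M D"
      unfolding T_def by auto
    have "measure M D' \<le> 2 * measure M D" if "D' \<in> sets M \<and> D' \<subseteq> R \<and> measure M D' \<le> a" for D'
      using T(3)[of "measure M D'"] that D(4) unfolding T_def by auto
    then show ?thesis using D(1-3) by (intro exI[of _ D]) auto
  qed
qed

lemma atomless_subset_measure_between:
  assumes M: "sigma_finite_measure M" and atomless: "\<And>B. B \<subseteq> S \<Longrightarrow> \<not> measure_atom M B"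
    and B: "B \<in> sets M" "B \<subseteq> S" "emeasure M B < \<infinity>" and a: "0 < a" "2 * a < measure M B"
  shows "\<exists>C. C \<in> sets M \<and> C \<subseteq> B \<and> a \<le> measure M C \<and> measure M C \<le> 2 * a"
proof (rule ccontr)
  \<comment> \<open>Greedily remove almost largest pieces of measure at most \<open>a\<close>.  If their union never reaches
    \<open>a\<close>, the pieces shrink to \<open>0\<close>, yet the positive remainder still contains a small piece,
    contradicting near-maximality.\<close>
  assume none: "\<not> ?thesis"
  have fin: "emeasure M C < \<infinity>" if "C \<subseteq> B" for C
    using that B(1,3) by (rule emeasure_subset_finite)
  define Inv where "Inv n U \<longleftrightarrow> U \<in> sets M \<and> U \<subseteq> B \<and> measure M U < a" for n :: nat and U
  define Q where "Q n U E \<longleftrightarrow> E \<in> sets M \<and> E \<subseteq> B - U \<and> measure M E \<le> a \<and>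
    (\<forall>D'. D' \<in> sets M \<and> D' \<subseteq> B - U \<and> measure M D' \<le> a \<longrightarrow> measure M D' \<le> 2 * measure M E)"
    for n :: nat and U E
  have step: "\<And>n U. Inv n U \<Longrightarrow> \<exists>E. E \<inter> U = {} \<and> Q n U E \<and> Inv (Suc n) (U \<union> E)"
  proof -
    fix n U assume "Inv n U"
    then have U: "U \<in> sets M" "U \<subseteq> B" "measure M U < a" by (simp_all add: Inv_def)
    have "\<exists>E. Q n U E"
      unfolding Q_def by (rule exists_almost_largest_subset) (use a in simp)
    then obtain E where E: "Q n U E" ..
    then have E': "E \<in> sets M" "E \<subseteq> B - U" "measure M E \<le> a" by (simp_all add: Q_def)
    have "measure M (U \<union> E) = measure M U + measure M E"
      using U E' fin[of U] fin[of E] by (intro measure_Union) (auto simp: less_top)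
    then have "measure M (U \<union> E) \<le> 2 * a" using U(3) E'(3) by linarith
    moreover have "U \<union> E \<in> sets M" "U \<union> E \<subseteq> B" using U E' by auto
    ultimately have "\<not> a \<le> measure M (U \<union> E)" using none by blast
    then show "\<exists>E. E \<inter> U = {} \<and> Q n U E \<and> Inv (Suc n) (U \<union> E)"
      using U E E' unfolding Inv_def by (intro exI[of _ E]) auto
  qed
  have Inv0: "Inv 0 {}" using a by (simp add: Inv_def)
  obtain E where E: "disjoint_family E" "\<And>n. Q n (\<Union>m<n. E m) (E n)" "\<And>n. Inv n (\<Union>m<n. E m)"
    using disjoint_family_stepwise[of Inv Q, OF Inv0 step] by blast
  have E_sets: "E n \<in> sets M" "E n \<subseteq> B" for n
    using E(2)[of n] by (auto simp: Q_def)
  define V where "V = (\<Union>n. E n)"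
  have V: "V \<in> sets M" "V \<subseteq> B" using E_sets by (auto simp: V_def)
  have sums: "(\<lambda>n. measure M (E n)) sums measure M V"
    unfolding V_def using E(1) E_sets(1) fin[OF V(2)] by (intro measure_UNION) (auto simp: V_def less_top)
  have "measure M V \<le> a"
  proof -
    have "(\<Sum>m<n. measure M (E m)) = measure M (\<Union>m<n. E m)" for n
      using E(1) E_sets fin
      by (intro measure_finite_Union[symmetric]) (auto simp: less_top disjoint_family_on_def)
    then have "(\<Sum>m<n. measure M (E m)) \<le> a" for n
      using E(3)[of n] by (simp add: Inv_def)
    then have "(\<Sum>n. measure M (E n)) \<le> a" by (rule suminf_le_const[OF sums_summable[OF sums]])
    then show ?thesis using sums_unique[OF sums] by simp
  qed
  moreover have "measure M (B - V) = measure M B - measure M V"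
    using B(1,3) V by (intro measure_Diff) (auto simp: less_top)
  ultimately have "0 < measure M (B - V)" using a by linarith
  then have "0 < emeasure M (B - V)"
    using finite_emeasure_eq_measure[OF fin[of "B - V"]] by simp
  moreover have "B - V \<in> sets M" "B - V \<subseteq> S" using B(1,2) V(1) by auto
  ultimately obtain D where D: "D \<in> sets M" "D \<subseteq> B - V" "0 < measure M D" "measure M D \<le> a"
    "emeasure M D < \<infinity>"
    using atomless_small_subset[OF M atomless, where D = "B - V" and \<eta> = a] a(1) by blast
  have D_le: "measure M D \<le> 2 * measure M (E n)" for n
  proof -
    have "D \<subseteq> B - (\<Union>m<n. E m)" using D(2) by (auto simp: V_def)
    then show ?thesis using E(2)[of n] D(1,4) by (simp add: Q_def)
  qed
  have "(\<lambda>n. measure M (E n)) \<longlonglongrightarrow> 0"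
    by (rule summable_LIMSEQ_zero[OF sums_summable[OF sums]])
  moreover have "0 < measure M D / 2" using D(3) by simp
  ultimately have "\<forall>\<^sub>F n in sequentially. measure M (E n) < measure M D / 2"
    by (rule order_tendstoD(2))
  then obtain N where "measure M (E N) < measure M D / 2"
    unfolding eventually_sequentially by blast
  with D_le[of N] show False by linarith
qed

lemma atomless_subset_emeasure_between:
  assumes M: "sigma_finite_measure M" and atomless: "\<And>B. B \<subseteq> S \<Longrightarrow> \<not> measure_atom M B"
    and B: "B \<in> sets M" "B \<subseteq> S" "ennreal (2 * a) < emeasure M B" and a: "0 < a"
  obtains C where "C \<in> sets M" "C \<subseteq> B" "ennreal a \<le> emeasure M C" "emeasure M C \<le> ennreal (2 * a)"
proof -
  obtain B' where B': "B' \<in> sets M" "B' \<subseteq> B" "emeasure M B' < \<infinity>" "ennreal (2 * a) < emeasure M B'"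
  proof (cases "emeasure M B = \<infinity>")
    case True
    from sigma_finite_measure.approx_PInf_emeasure_with_finite[OF M B(1) True, of "2 * a"]
    obtain Z where "Z \<in> sets M" "Z \<subseteq> B" "emeasure M Z < \<infinity>" "ennreal (2 * a) < emeasure M Z"
      by auto
    then show thesis using that by blast
  next
    case False
    then show thesis using that[of B] B by (simp add: less_top)
  qed
  have "2 * a < measure M B'"
    using B'(4) finite_emeasure_eq_measure[OF B'(3)] a by (simp add: ennreal_less_iff)
  moreover have "B' \<subseteq> S" using B'(2) B(2) by blast
  ultimately obtain C where C: "C \<in> sets M" "C \<subseteq> B'" "a \<le> measure M C" "measure M C \<le> 2 * a"
    using atomless_subset_measure_between[OF M atomless B'(1) _ B'(3) a] by blast
  have "emeasure M C = ennreal (measure M C)"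
    using finite_emeasure_eq_measure[OF emeasure_subset_finite[OF C(2) B'(1,3)]] .
  then show thesis
    using that[of C] C B'(2) by (simp add: ennreal_leI)
qed

section \<open>Choosing the blocks\<close>

lemma almost_isometric_linfty_embedding_atomless_infinite:
  assumes M: "sigma_finite_measure M" and \<Phi>: "orlicz_function \<Phi>"
    and p: "lattice_norm p" "p (1, 0) = 1" "p (0, 1) = 1" and \<epsilon>: "0 < \<epsilon>"
    and S: "S \<in> sets M" "emeasure M S = \<infinity>" and atomless: "\<And>B. B \<subseteq> S \<Longrightarrow> \<not> measure_atom M B"
    and not_delta2: "\<not> delta2_Rplus \<Phi>"
  shows "\<exists>P. almost_isometric_linfty_embedding M \<Phi> p \<epsilon> P"
proof (rule almost_isometric_linfty_embedding_of_blocks[OF \<Phi> p \<epsilon>])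
  show "{} \<in> sets M \<and> {} \<subseteq> S \<and> emeasure M {} < \<infinity>" by simp
  fix d c :: real and n :: nat and U
  assume d: "0 < d" and c: "0 < c" and U: "U \<in> sets M \<and> U \<subseteq> S \<and> emeasure M U < \<infinity>"
  obtain u where u: "0 \<le> u" "\<Phi> (u / (1 + d)) < c / 2 * \<Phi> u"
    using not_delta2_Rplus_ratio[OF \<Phi> not_delta2 d, of "c / 2"] c by auto
  have pos: "0 < \<Phi> u" using orlicz_function_pos_of_ratio[OF \<Phi> u(2)] c by simp
  have "emeasure M S \<le> emeasure M (S - U) + emeasure M U"
    using S(1) U by (intro order_trans[OF emeasure_mono emeasure_subadditive]) auto
  then have "emeasure M (S - U) = \<infinity>"
    using S(2) U by (auto simp: top_unique ennreal_add_eq_top less_top)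
  then obtain E where E: "E \<in> sets M" "E \<subseteq> S - U"
    "ennreal (1 / \<Phi> u) \<le> emeasure M E" "emeasure M E \<le> ennreal (2 * (1 / \<Phi> u))"
    using atomless_subset_emeasure_between[OF M, of S "S - U" "1 / \<Phi> u"] atomless S(1) U pos
    by auto
  have block: "orlicz_block M \<Phi> d (2 * (c / 2)) E u"
    using E by (intro orlicz_blockI[OF \<Phi> E(1) u(1,2)]) auto
  have "emeasure M (U \<union> E) \<le> emeasure M U + emeasure M E"
    using U E(1) by (intro emeasure_subadditive) auto
  then have "emeasure M (U \<union> E) < \<infinity>"
    using U E(4) by (auto simp: order.strict_trans1)
  then show "\<exists>E u. E \<inter> U = {} \<and> orlicz_block M \<Phi> d c E u \<and>
      U \<union> E \<in> sets M \<and> U \<union> E \<subseteq> S \<and> emeasure M (U \<union> E) < \<infinity>"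
    using U E(1,2) block by (intro exI[of _ E] exI[of _ u]) auto
qed

lemma almost_isometric_linfty_embedding_atomless_finite:
  assumes M: "sigma_finite_measure M" and \<Phi>: "orlicz_function \<Phi>"
    and p: "lattice_norm p" "p (1, 0) = 1" "p (0, 1) = 1" and \<epsilon>: "0 < \<epsilon>"
    and S: "S \<in> sets M" "0 < emeasure M S" "emeasure M S < \<infinity>"
    and atomless: "\<And>B. B \<subseteq> S \<Longrightarrow> \<not> measure_atom M B"
    and not_delta2: "\<not> delta2_infty \<Phi>"
  shows "\<exists>P. almost_isometric_linfty_embedding M \<Phi> p \<epsilon> P"
proof -
  define m where "m = measure M S"
  have m: "0 < m" using S(2) finite_emeasure_eq_measure[OF S(3)] by (simp add: m_def)
  have fin: "emeasure M X < \<infinity>" if "X \<subseteq> S" for X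
    using that S(1,3) by (rule emeasure_subset_finite)
  show ?thesis
  \<comment> \<open>The invariant keeps at least half of \<open>S\<close> free for the later blocks.\<close>
  proof (rule almost_isometric_linfty_embedding_of_blocks[OF \<Phi> p \<epsilon>,
        of "\<lambda>n U. U \<in> sets M \<and> U \<subseteq> S \<and> measure M U \<le> m / 2 - m * (1 / 2) ^ Suc n"])
    show "{} \<in> sets M \<and> {} \<subseteq> S \<and> measure M {} \<le> m / 2 - m * (1 / 2) ^ Suc 0" by simp
    fix d c :: real and n :: nat and U
    assume d: "0 < d" and c: "0 < c"
      and U: "U \<in> sets M \<and> U \<subseteq> S \<and> measure M U \<le> m / 2 - m * (1 / 2) ^ Suc n"
    define q :: real where "q = (1 / 2) ^ Suc n"
    have q: "0 < q" by (simp add: q_def)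
    obtain V where V: "4 / (m * q) \<le> \<Phi> V"
      using orlicz_function_unbounded[OF \<Phi>] by blast
    have "0 < c / 2" "0 < max 1 \<bar>V\<bar>" using c by auto
    then obtain u where u: "max 1 \<bar>V\<bar> \<le> u" "\<Phi> (u / (1 + d)) < c / 2 * \<Phi> u"
      using not_delta2_infty_ratio[OF \<Phi> not_delta2 d] by blast
    have "\<Phi> V \<le> \<Phi> u" using u(1) by (intro orlicz_function_mono[OF \<Phi>]) auto
    then have large: "4 / (m * q) \<le> \<Phi> u" using V by linarith
    have pos: "0 < \<Phi> u" using orlicz_function_pos_of_ratio[OF \<Phi> u(2)] c by simp
    have small: "2 * (1 / \<Phi> u) \<le> m * q / 2"
    proof -
      have "2 * (1 / \<Phi> u) \<le> 2 * (1 / (4 / (m * q)))"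
        using large m q pos by (intro mult_left_mono divide_left_mono) auto
      then show ?thesis by simp
    qed
    have "measure M (S - U) = m - measure M U"
      unfolding m_def using S(1,3) U by (intro measure_Diff) (auto simp: less_top)
    moreover have "measure M U \<le> m / 2 - m * q" "0 < m * q"
      using U m q by (simp_all add: q_def)
    ultimately have "2 * (1 / \<Phi> u) < measure M (S - U)"
      using small m by linarith
    then have "ennreal (2 * (1 / \<Phi> u)) < emeasure M (S - U)"
      using finite_emeasure_eq_measure[OF fin[of "S - U"]] pos by (simp add: ennreal_less_iff)
    then obtain E where E: "E \<in> sets M" "E \<subseteq> S - U"
      "ennreal (1 / \<Phi> u) \<le> emeasure M E" "emeasure M E \<le> ennreal (2 * (1 / \<Phi> u))"
      using atomless_subset_emeasure_between[OF M, of S "S - U" "1 / \<Phi> u"] atomless S(1) U pos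
      by auto
    have u0: "0 \<le> u" using u(1) by linarith
    have block: "orlicz_block M \<Phi> d (2 * (c / 2)) E u"
      using E by (intro orlicz_blockI[OF \<Phi> E(1) u0 u(2)]) auto
    have "E \<subseteq> S" using E(2) by blast
    then have "measure M E \<le> 2 * (1 / \<Phi> u)"
      using E(4) finite_emeasure_eq_measure[OF fin] pos by simp
    moreover have "measure M (U \<union> E) = measure M U + measure M E"
      using U E(1,2) fin[of U] fin[of E] by (intro measure_Union) (auto simp: less_top)
    moreover have "measure M U \<le> m / 2 - m * q" using U by (simp add: q_def)
    ultimately have "measure M (U \<union> E) \<le> m / 2 - m * (q / 2)"
      using small by linarith
    then have "measure M (U \<union> E) \<le> m / 2 - m * (1 / 2) ^ Suc (Suc n)"
      by (simp add: q_def)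
    then show "\<exists>E u. E \<inter> U = {} \<and> orlicz_block M \<Phi> d c E u \<and>
        U \<union> E \<in> sets M \<and> U \<union> E \<subseteq> S \<and> measure M (U \<union> E) \<le> m / 2 - m * (1 / 2) ^ Suc (Suc n)"
      using U E(1,2) block by (intro exI[of _ E] exI[of _ u]) auto
  qed
qed

lemma orlicz_function_le_one:
  assumes \<Phi>: "orlicz_function \<Phi>"
  obtains v where "0 < v" "\<Phi> v \<le> 1"
proof -
  define v where "v = 1 / (1 + \<Phi> 1)"
  have v: "0 < v" "v \<le> 1" using orlicz_function_nonneg[OF \<Phi>, of 1] by (simp_all add: v_def)
  have "\<Phi> (v * 1) \<le> v * \<Phi> 1" using v by (intro orlicz_function_scale_le[OF \<Phi>]) auto
  also have "\<dots> \<le> 1" using orlicz_function_nonneg[OF \<Phi>, of 1] by (simp add: v_def)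
  finally show thesis using that v(1) by simp
qed

lemma almost_isometric_linfty_embedding_atoms:
  fixes A :: "nat \<Rightarrow> 'a set"
  assumes \<Phi>: "orlicz_function \<Phi>"
    and p: "lattice_norm p" "p (1, 0) = 1" "p (0, 1) = 1" and \<epsilon>: "0 < \<epsilon>"
    and A: "disjoint_family A" "\<And>i. A i \<in> sets M" "\<And>i. emeasure M (A i) = 1"
    and not_delta2: "\<not> delta2_zero \<Phi>"
  shows "\<exists>P. almost_isometric_linfty_embedding M \<Phi> p \<epsilon> P"
proof -
  obtain v where v: "0 < v" "\<Phi> v \<le> 1" using orlicz_function_le_one[OF \<Phi>] .
  have measure_atoms: "emeasure M (\<Union>i\<in>{k..<k + m}. A i) = of_nat m" for k m
    using A by (subst sum_emeasure[symmetric]) (auto simp: disjoint_family_on_def)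
  show ?thesis
  proof (rule almost_isometric_linfty_embedding_of_blocks[OF \<Phi> p \<epsilon>,
        of "\<lambda>n U. \<exists>k. U \<subseteq> (\<Union>i<k. A i)"])
    show "\<exists>k. {} \<subseteq> (\<Union>i<k. A i)" by simp
    fix d c :: real and n :: nat and U
    assume d: "0 < d" and c: "0 < c" and "\<exists>k. U \<subseteq> (\<Union>i<k. A i)"
    then obtain k where U: "U \<subseteq> (\<Union>i<k. A i)" by blast
    have "0 < c / 2" using c by simp
    then obtain u where u: "0 \<le> u" "u \<le> v" "\<Phi> (u / (1 + d)) < c / 2 * \<Phi> u"
      using not_delta2_zero_ratio[OF \<Phi> not_delta2 d _ v(1)] by blast
    have pos: "0 < \<Phi> u" using orlicz_function_pos_of_ratio[OF \<Phi> u(3)] c by simp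
    have "\<Phi> u \<le> 1" using orlicz_function_mono[OF \<Phi>, of u v] u(1,2) v by simp
    then have ge1: "1 \<le> 1 / \<Phi> u" using pos by simp
    define m where "m = nat \<lceil>1 / \<Phi> u\<rceil>"
    have m: "1 / \<Phi> u \<le> m" "m \<le> 2 * (1 / \<Phi> u)" using ge1 by (simp_all add: m_def) linarith
    define E where "E = (\<Union>i\<in>{k..<k + m}. A i)"
    have E: "E \<in> sets M" using A(2) by (auto simp: E_def)
    have "emeasure M E = ennreal (real m)"
      using measure_atoms[of k m] by (simp add: E_def ennreal_of_nat_eq_real_of_nat)
    then have block: "orlicz_block M \<Phi> d (2 * (c / 2)) E u"
      using m by (intro orlicz_blockI[OF \<Phi> E u(1,3)]) (simp_all add: ennreal_leI)
    have "x \<notin> U" if "x \<in> E" for x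
    proof
      assume "x \<in> U"
      then obtain j where "j < k" "x \<in> A j" using U by blast
      moreover obtain i where "k \<le> i" "x \<in> A i" using \<open>x \<in> E\<close> by (auto simp: E_def)
      ultimately show False using disjoint_family_onD[OF A(1), of i j] by auto
    qed
    then have "E \<inter> U = {}" by blast
    moreover have "U \<union> E \<subseteq> (\<Union>i<k + m. A i)"
      using U unfolding E_def by (intro Un_least order.trans[OF U] UN_mono) auto
    ultimately show "\<exists>E u. E \<inter> U = {} \<and> orlicz_block M \<Phi> d c E u \<and> (\<exists>k. U \<union> E \<subseteq> (\<Union>i<k. A i))"
      using block by (intro exI[of _ E] exI[of _ u]) auto
  qed
qed

lemma not_suitable_delta2_cases:
  assumes "\<not> suitable_delta2 M N A \<Phi>"
  obtains "infinite N" "\<not> delta2_zero \<Phi>"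
    | "emeasure M (nonatomic_part M N A) = \<infinity>" "\<not> delta2_Rplus \<Phi>"
    | "0 < emeasure M (nonatomic_part M N A)" "emeasure M (nonatomic_part M N A) < \<infinity>"
      "\<not> delta2_infty \<Phi>"
  using assms that unfolding suitable_delta2_def Let_def
  by (cases "emeasure M (nonatomic_part M N A) = 0"; cases "emeasure M (nonatomic_part M N A) = \<infinity>")
    (auto simp: less_top zero_less_iff_neq_zero split: if_splits)

lemma atomic_structure_nonatomic_part:
  assumes "atomic_structure M N A"
  shows "nonatomic_part M N A \<in> sets M"
    and "\<And>B. B \<subseteq> nonatomic_part M N A \<Longrightarrow> \<not> measure_atom M B"
proof -
  have "A i \<in> sets M" if "i \<in> N" for i
    using assms that unfolding atomic_structure_def measure_atom_def by blast
  then show "nonatomic_part M N A \<in> sets M"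
    unfolding nonatomic_part_def by (intro sets.Diff sets.top sets.countable_UN') auto
  show "\<And>B. B \<subseteq> nonatomic_part M N A \<Longrightarrow> \<not> measure_atom M B"
    using assms unfolding atomic_structure_def nonatomic_part_def by blast
qed

lemma atomic_structure_infinite:
  assumes "atomic_structure M N A" "infinite N"
  shows "disjoint_family A" "\<And>i. A i \<in> sets M" "\<And>i. emeasure M (A i) = 1"
proof -
  have "N = UNIV" using assms unfolding atomic_structure_def by auto
  then show "disjoint_family A" "\<And>i. A i \<in> sets M" "\<And>i. emeasure M (A i) = 1"
    using assms(1) unfolding atomic_structure_def measure_atom_def by auto
qed

theorem theorem3:
  fixes M :: "'a measure" and N :: "nat set" and A :: "nat \<Rightarrow> 'a set"
    and p :: "real \<times> real \<Rightarrow> real" and \<Phi> :: "real \<Rightarrow> real" and \<epsilon> :: real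
  assumes "sigma_finite_measure M" and "complete_measure M"
    and "atomic_structure M N A"
    and "lattice_norm p" and "p (1, 0) = 1" and "p (0, 1) = 1"
    and "orlicz_function \<Phi>" and "\<not> suitable_delta2 M N A \<Phi>"
    and "\<epsilon> > 0"
  shows "\<exists>P :: (nat \<Rightarrow> real) \<Rightarrow> ('a \<Rightarrow> real).
           (\<forall>z\<in>linfty. P z \<in> orlicz_space M \<Phi>) \<and>
           (\<forall>z\<in>linfty. \<forall>w\<in>linfty. \<forall>a b.
              AE t in M. P (\<lambda>n. a * z n + b * w n) t = a * P z t + b * P w t) \<and>
           (\<forall>z\<in>linfty. (\<forall>n. 0 \<le> z n) \<longrightarrow> (AE t in M. 0 \<le> P z t)) \<and>
           (\<forall>z\<in>linfty. sup_norm z \<le> orlicz_norm M \<Phi> p (P z) \<and>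
                        orlicz_norm M \<Phi> p (P z) \<le> (1 + \<epsilon>) * sup_norm z)"
proof -
  note M = assms(1) and p = assms(4-6) and \<Phi> = assms(7) and \<epsilon> = assms(9)
  note na = atomic_structure_nonatomic_part[OF assms(3)]
  have "\<exists>P. almost_isometric_linfty_embedding M \<Phi> p \<epsilon> P"
    using assms(8)
  proof (cases rule: not_suitable_delta2_cases)
    case 1
    with atomic_structure_infinite[OF assms(3)] show ?thesis
      by (intro almost_isometric_linfty_embedding_atoms[OF \<Phi> p \<epsilon>]) auto
  next
    case 2
    with na show ?thesis
      by (intro almost_isometric_linfty_embedding_atomless_infinite[OF M \<Phi> p \<epsilon>]) auto
  next
    case 3
    with na show ?thesis
      by (intro almost_isometric_linfty_embedding_atomless_finite[OF M \<Phi> p \<epsilon>]) auto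
  qed
  then show ?thesis unfolding almost_isometric_linfty_embedding_def .
qed

end
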